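(* Let $g>0$ and let $\hat\tau$ be a $\widehat{\mathbb{Z}}$-tropical type of genus $g$ inducing essential types, with $k_{\hat\tau}=b_1(\Gamma)+2\sum_{v\in V_+}g_v-|V_+|$. Then $k_{\hat\tau}=2g-1$ if and only if $\Gamma$ consists of a single internal vertex of genus $g$ together with some number (possibly zero) of external vertices of genus $0$, each joined to the internal vertex by a single edge.
   Context: A $\widehat{\mathbb{Z}}$-tropical type $\hat\tau$ consists of a graph $\Gamma$ (vertices $V$, edges $E$, $n$ legs) with genera $g_v\ge0$ satisfying $\sum_vg_v+b_1(\Gamma)=g$, degrees $d_v\in\mathbb{Z}$, a partition $V=V_0\sqcup V_+$ into external and internal vertices, and slopes $m_{\vec e}=-m_{\overleftarrow e}\in\widehat{\mathbb{Z}}$ satisfying balancing $d_v=\sum_{e\ni v}m_{\vec e}+\sum_{\text{legs }i\text{ at }v}c_i$ in $\widehat{\mathbb{Z}}$. It induces essential types if every edge joins a vertex of $V_0$ to a vertex of $V_+$ and every $v\in V_+$ has $g_v>0$. *)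

theory Defs
  imports Main
begin

text \<open>A finite multigraph: vertex set V, edge set E, each edge e oriented from
  src e to tgt e (the chosen orientation gives the half-edge \<open>e\<rightarrow>\<close>).\<close>

definition graph_connected :: "'v set \<Rightarrow> 'e set \<Rightarrow> ('e \<Rightarrow> 'v) \<Rightarrow> ('e \<Rightarrow> 'v) \<Rightarrow> bool" where
  "graph_connected V E src tgt \<longleftrightarrow>
     (\<forall>u\<in>V. \<forall>v\<in>V. (u, v) \<in> ({(src e, tgt e) | e. e \<in> E} \<union> {(tgt e, src e) | e. e \<in> E})\<^sup>*)"

definition betti1 :: "'v set \<Rightarrow> 'e set \<Rightarrow> int" where
  "betti1 V E = int (card E) - int (card V) + 1"

text \<open>Tropical type of genus g with n legs; slopes/contact orders take values in
  a commutative ring 'z (standing for \<open>\<widehat>\<int>\<close>); degrees are integers.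
  m e is the slope of e oriented src e \<rightarrow> tgt e, the opposite orientation has slope - m e.\<close>
definition tropical_type ::
  "'v set \<Rightarrow> 'v set \<Rightarrow> 'v set \<Rightarrow> 'e set \<Rightarrow> ('e \<Rightarrow> 'v) \<Rightarrow> ('e \<Rightarrow> 'v) \<Rightarrow> ('v \<Rightarrow> nat) \<Rightarrow> nat
   \<Rightarrow> nat \<Rightarrow> (nat \<Rightarrow> 'v) \<Rightarrow> (nat \<Rightarrow> 'z::comm_ring_1) \<Rightarrow> ('v \<Rightarrow> int) \<Rightarrow> ('e \<Rightarrow> 'z) \<Rightarrow> bool" where
  "tropical_type V V0 Vp E src tgt gen g n legv c d m \<longleftrightarrow>
     finite V \<and> finite E \<and> V \<noteq> {} \<and>
     V0 \<union> Vp = V \<and> V0 \<inter> Vp = {} \<and>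
     (\<forall>e\<in>E. src e \<in> V \<and> tgt e \<in> V) \<and>
     (\<forall>i<n. legv i \<in> V) \<and>
     graph_connected V E src tgt \<and>
     int (\<Sum>v\<in>V. gen v) + betti1 V E = int g \<and>
     (\<forall>v\<in>V. of_int (d v) =
        (\<Sum>e\<in>{e\<in>E. src e = v}. m e) + (\<Sum>e\<in>{e\<in>E. tgt e = v}. - m e)
        + (\<Sum>i\<in>{i. i < n \<and> legv i = v}. c i))"

definition induces_essential_types ::
  "'v set \<Rightarrow> 'v set \<Rightarrow> 'e set \<Rightarrow> ('e \<Rightarrow> 'v) \<Rightarrow> ('e \<Rightarrow> 'v) \<Rightarrow> ('v \<Rightarrow> nat) \<Rightarrow> bool" where
  "induces_essential_types V0 Vp E src tgt gen \<longleftrightarrow>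
     (\<forall>e\<in>E. (src e \<in> V0 \<and> tgt e \<in> Vp) \<or> (src e \<in> Vp \<and> tgt e \<in> V0)) \<and>
     (\<forall>v\<in>Vp. gen v > 0)"

definition k_type :: "'v set \<Rightarrow> 'v set \<Rightarrow> 'e set \<Rightarrow> ('v \<Rightarrow> nat) \<Rightarrow> int" where
  "k_type V Vp E gen = betti1 V E + 2 * int (\<Sum>v\<in>Vp. gen v) - int (card Vp)"

end

theory Submission
  imports Defs
begin

text \<open>Substituting the genus formula into \<open>k\<^sub>\<tau>\<close> gives
  \<open>2g - 1 - k\<^sub>\<tau> = |E| + 2 \<Sum>\<^sub>v\<^sub>\<in>\<^sub>V\<^sub>0 g\<^sub>v - |V\<^sub>0|\<close>.
  In a connected graph every edge of which joins \<open>V\<^sub>0\<close> to \<open>V\<^sub>+\<close>, each external vertex lies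
  on an edge, and each edge has exactly one external end, so \<open>|V\<^sub>0| \<le> |E|\<close>.  Hence
  \<open>k\<^sub>\<tau> = 2g - 1\<close> forces all external genera to vanish and the map sending an edge to its
  external end to be a bijection: every external vertex is a leaf.  Walking away from an
  internal vertex \<open>w\<close> one can then only reach neighbours of \<open>w\<close> and come back, so by
  connectedness \<open>w\<close> is the only internal vertex.  Conversely, for such a star the genus
  formula forces \<open>b\<^sub>1(\<Gamma>) = 0\<close>, whence \<open>k\<^sub>\<tau> = 2g - 1\<close>.\<close>

definition adj :: "'e set \<Rightarrow> ('e \<Rightarrow> 'v) \<Rightarrow> ('e \<Rightarrow> 'v) \<Rightarrow> ('v \<times> 'v) set" where
  "adj E src tgt = {(src e, tgt e) | e. e \<in> E} \<union> {(tgt e, src e) | e. e \<in> E}"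

definition at_most_one_edge_at :: "'v set \<Rightarrow> 'e set \<Rightarrow> ('e \<Rightarrow> 'v) \<Rightarrow> ('e \<Rightarrow> 'v) \<Rightarrow> bool" where
  "at_most_one_edge_at V0 E src tgt \<longleftrightarrow>
     (\<forall>v\<in>V0. \<forall>e\<in>E. \<forall>e'\<in>E. v \<in> {src e, tgt e} \<longrightarrow> v \<in> {src e', tgt e'} \<longrightarrow> e = e')"

definition bipartite :: "'v set \<Rightarrow> 'v set \<Rightarrow> 'e set \<Rightarrow> ('e \<Rightarrow> 'v) \<Rightarrow> ('e \<Rightarrow> 'v) \<Rightarrow> bool" where
  "bipartite V0 Vp E src tgt \<longleftrightarrow>
     (\<forall>e\<in>E. (src e \<in> V0 \<and> tgt e \<in> Vp) \<or> (src e \<in> Vp \<and> tgt e \<in> V0))"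

lemma graph_connected_iff_adj:
  "graph_connected V E src tgt \<longleftrightarrow> (\<forall>u\<in>V. \<forall>v\<in>V. (u, v) \<in> (adj E src tgt)\<^sup>*)"
  unfolding graph_connected_def adj_def ..

lemma induces_essential_types_bipartite:
  "induces_essential_types V0 Vp E src tgt gen \<Longrightarrow> bipartite V0 Vp E src tgt"
  unfolding induces_essential_types_def bipartite_def by blast

lemma graph_connected_no_edges:
  assumes "graph_connected V {} src tgt" and "u \<in> V"
  shows "V = {u}"
  using assms by (auto simp: graph_connected_iff_adj adj_def)

lemma graph_connected_incident_edge:
  assumes "graph_connected V E src tgt" and "u \<in> V" and "w \<in> V" and "u \<noteq> w"
  obtains e where "e \<in> E" and "u \<in> {src e, tgt e}"
proof -
  have "(u, w) \<in> (adj E src tgt)\<^sup>*"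
    using assms(1-3) by (simp add: graph_connected_iff_adj)
  with \<open>u \<noteq> w\<close> obtain y where "(u, y) \<in> adj E src tgt"
    by (meson converse_rtranclE)
  then show thesis
    using that by (auto simp: adj_def)
qed

lemma bipartite_no_internal_vertex:
  assumes "bipartite V0 {} E src tgt" and "graph_connected V E src tgt"
    and "V0 = V" and "V \<noteq> {}"
  shows "E = {}" and "card V0 = 1"
proof -
  show "E = {}"
    using assms(1) by (auto simp: bipartite_def)
  obtain u where "u \<in> V"
    using assms(4) by blast
  then show "card V0 = 1"
    using assms(2,3) graph_connected_no_edges \<open>E = {}\<close> by fastforce
qed

text \<open>A walk from \<open>w\<close> that steps to a leaf must return to \<open>w\<close> at once, along the leaf's
  only edge.\<close>

lemma bipartite_reachable_from_hub:
  assumes bip: "bipartite V0 Vp E src tgt" and disj: "V0 \<inter> Vp = {}"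
    and leaf: "at_most_one_edge_at V0 E src tgt"
    and "w \<in> Vp" and "(w, x) \<in> (adj E src tgt)\<^sup>*"
  shows "x = w \<or> (\<exists>e\<in>E. {src e, tgt e} = {x, w})"
  using assms(5)
proof (induction rule: rtrancl_induct)
  case base
  then show ?case by simp
next
  case (step x y)
  from step.hyps(2) obtain e' where e': "e' \<in> E" "{src e', tgt e'} = {x, y}"
    by (auto simp: adj_def)
  from step.IH show ?case
  proof
    assume "x = w"
    then show ?thesis
      using e' by auto
  next
    assume "\<exists>e\<in>E. {src e, tgt e} = {x, w}"
    then obtain e where e: "e \<in> E" "{src e, tgt e} = {x, w}" by blast
    have "x \<in> V0"
      using bip e \<open>w \<in> Vp\<close> disj unfolding bipartite_def by (fastforce simp: doubleton_eq_iff)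
    then have "e' = e"
      using leaf e e' unfolding at_most_one_edge_at_def by blast
    then show ?thesis
      using e e' by (auto simp: doubleton_eq_iff)
  qed
qed

text \<open>The external end of an edge maps \<open>E\<close> onto \<open>V\<^sub>0\<close>; when \<open>|E| \<le> |V\<^sub>0|\<close> it is injective.\<close>

lemma connected_bipartite_leaves:
  assumes "finite E" and "finite V0" and part: "V0 \<union> Vp = V" and disj: "V0 \<inter> Vp = {}"
    and conn: "graph_connected V E src tgt" and bip: "bipartite V0 Vp E src tgt"
    and "Vp \<noteq> {}" and "card E \<le> card V0"
  shows "card E = card V0" and "at_most_one_edge_at V0 E src tgt"
proof -
  define ext where "ext e = (if src e \<in> V0 then src e else tgt e)" for e
  have ext_iff: "ext e = v \<longleftrightarrow> v \<in> {src e, tgt e}" if "e \<in> E" "v \<in> V0" for e v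
    using bip disj that unfolding bipartite_def ext_def by auto
  have "ext ` E \<subseteq> V0"
    using bip unfolding bipartite_def ext_def by auto
  moreover have "V0 \<subseteq> ext ` E"
  proof
    fix v assume "v \<in> V0"
    obtain w where "w \<in> Vp" using \<open>Vp \<noteq> {}\<close> by blast
    then obtain e where "e \<in> E" "v \<in> {src e, tgt e}"
      using graph_connected_incident_edge[OF conn] \<open>v \<in> V0\<close> part disj by blast
    then show "v \<in> ext ` E"
      using ext_iff \<open>v \<in> V0\<close> by (metis image_eqI)
  qed
  ultimately have img: "ext ` E = V0" by blast
  then show card: "card E = card V0"
    using surj_card_le[OF \<open>finite E\<close>, of V0 ext] \<open>card E \<le> card V0\<close> by simp
  have "inj_on ext E"
    using eq_card_imp_inj_on[OF \<open>finite E\<close>] img card by metis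
  then show "at_most_one_edge_at V0 E src tgt"
    unfolding at_most_one_edge_at_def using ext_iff by (metis inj_onD)
qed

lemma connected_bipartite_star:
  assumes "finite E" and "finite V0" and part: "V0 \<union> Vp = V" and disj: "V0 \<inter> Vp = {}"
    and conn: "graph_connected V E src tgt" and bip: "bipartite V0 Vp E src tgt"
    and "w \<in> Vp" and "card E \<le> card V0"
  shows "Vp = {w}" and "card E = card V0"
    and "\<And>v. v \<in> V0 \<Longrightarrow> card {e\<in>E. {src e, tgt e} = {v, w}} = 1"
proof -
  note leaves = connected_bipartite_leaves[OF assms(1-6) _ assms(8)]
  have leaf: "at_most_one_edge_at V0 E src tgt"
    using leaves(2) \<open>w \<in> Vp\<close> by blast
  have no_internal_edge: "{src e, tgt e} \<noteq> {x, y}" if "e \<in> E" "x \<in> Vp" "y \<in> Vp" for e x y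
    using bip disj that unfolding bipartite_def by (auto simp: doubleton_eq_iff)
  show Vp: "Vp = {w}"
  proof (intro equalityI subsetI)
    fix x assume "x \<in> Vp"
    then have "(w, x) \<in> (adj E src tgt)\<^sup>*"
      using conn part \<open>w \<in> Vp\<close> by (auto simp: graph_connected_iff_adj)
    then have "x = w \<or> (\<exists>e\<in>E. {src e, tgt e} = {x, w})"
      by (rule bipartite_reachable_from_hub[OF bip disj leaf \<open>w \<in> Vp\<close>])
    then show "x \<in> {w}"
      using no_internal_edge \<open>x \<in> Vp\<close> \<open>w \<in> Vp\<close> by blast
  qed (use \<open>w \<in> Vp\<close> in simp)
  show "card E = card V0"
    using leaves(1) \<open>w \<in> Vp\<close> by blast
  show "card {e\<in>E. {src e, tgt e} = {v, w}} = 1" if v: "v \<in> V0" for v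
  proof -
    obtain e where e: "e \<in> E" "v \<in> {src e, tgt e}"
      using graph_connected_incident_edge[OF conn, of v w] v \<open>w \<in> Vp\<close> part disj by blast
    have "{src e, tgt e} = {v, w}"
      using bip e v disj Vp unfolding bipartite_def by auto
    moreover have "e' = e" if "e' \<in> E" "{src e', tgt e'} = {v, w}" for e'
      using leaf v e that insertI1[of v "{w}"] unfolding at_most_one_edge_at_def by metis
    ultimately have "{e\<in>E. {src e, tgt e} = {v, w}} = {e}"
      using e(1) by blast
    then show ?thesis by simp
  qed
qed

lemma k_type_eq_iff:
  assumes "finite V" and part: "V0 \<union> Vp = V" and disj: "V0 \<inter> Vp = {}"
    and genus: "int (\<Sum>v\<in>V. gen v) + betti1 V E = int g"
  shows "k_type V Vp E gen = 2 * int g - 1 \<longleftrightarrow> card E + 2 * (\<Sum>v\<in>V0. gen v) = card V0"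
proof -
  have fin: "finite V0" "finite Vp"
    using \<open>finite V\<close> part by auto
  have "(\<Sum>v\<in>V. gen v) = (\<Sum>v\<in>V0. gen v) + (\<Sum>v\<in>Vp. gen v)"
    and "card V = card V0 + card Vp"
    using sum.union_disjoint[OF fin disj] card_Un_disjoint[OF fin disj] part by simp_all
  then show ?thesis
    using genus unfolding k_type_def betti1_def by linarith
qed

lemma k_type_eq_imp_star:
  assumes "finite V" and "finite E" and "V \<noteq> {}" and part: "V0 \<union> Vp = V"
    and disj: "V0 \<inter> Vp = {}" and conn: "graph_connected V E src tgt"
    and bip: "bipartite V0 Vp E src tgt"
    and genus: "int (\<Sum>v\<in>V. gen v) + betti1 V E = int g"
    and "k_type V Vp E gen = 2 * int g - 1"
  shows "\<exists>w. Vp = {w} \<and> gen w = g \<and>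
    (\<forall>v\<in>V0. gen v = 0 \<and> card {e\<in>E. {src e, tgt e} = {v, w}} = 1)"
proof -
  have "finite V0"
    using \<open>finite V\<close> part by blast
  have count: "card E + 2 * (\<Sum>v\<in>V0. gen v) = card V0"
    using k_type_eq_iff[OF \<open>finite V\<close> part disj genus] assms(9) by blast
  have "Vp \<noteq> {}"
  proof
    assume "Vp = {}"
    then have "E = {}" "card V0 = 1"
      using bipartite_no_internal_vertex[of V0 E src tgt V] bip conn part \<open>V \<noteq> {}\<close> by auto
    with count show False by (simp; presburger)
  qed
  then obtain w where "w \<in> Vp" by blast
  have "card E \<le> card V0"
    using count by linarith
  note star = connected_bipartite_star[OF \<open>finite E\<close> \<open>finite V0\<close> part disj conn bip
      \<open>w \<in> Vp\<close> this]
  have "card E = card V0" and Vp: "Vp = {w}"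
    using star by simp_all
  then have external_genus: "\<forall>v\<in>V0. gen v = 0"
    using count \<open>finite V0\<close> by simp
  have "V = insert w V0" and "w \<notin> V0"
    using part disj Vp by auto
  then have "gen w = g"
    using genus external_genus \<open>finite V0\<close> \<open>card E = card V0\<close> by (simp add: betti1_def)
  then show ?thesis
    using Vp external_genus star(3) by blast
qed

lemma star_imp_k_type_eq:
  assumes "finite V0" and part: "V0 \<union> Vp = V" and disj: "V0 \<inter> Vp = {}"
    and genus: "int (\<Sum>v\<in>V. gen v) + betti1 V E = int g"
    and "Vp = {w}" and "gen w = g" and "\<forall>v\<in>V0. gen v = 0"
  shows "k_type V Vp E gen = 2 * int g - 1"
proof -
  have "V = insert w V0" and "w \<notin> V0"
    using part disj \<open>Vp = {w}\<close> by auto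
  then have "betti1 V E = 0"
    using genus assms(1,6,7) by simp
  then show ?thesis
    unfolding k_type_def using assms(5,6) by simp
qed

theorem lemma3p5p6:
  fixes V V0 Vp :: "'v set" and E :: "'e set" and src tgt :: "'e \<Rightarrow> 'v"
    and gen :: "'v \<Rightarrow> nat" and g n :: nat and legv :: "nat \<Rightarrow> 'v"
    and c :: "nat \<Rightarrow> 'z::comm_ring_1" and d :: "'v \<Rightarrow> int" and m :: "'e \<Rightarrow> 'z"
  assumes "g > 0"
    and "tropical_type V V0 Vp E src tgt gen g n legv c d m"
    and "induces_essential_types V0 Vp E src tgt gen"
  shows "k_type V Vp E gen = 2 * int g - 1 \<longleftrightarrow>
    (\<exists>w. Vp = {w} \<and> gen w = g \<and>
       (\<forall>v\<in>V0. gen v = 0 \<and> card {e\<in>E. {src e, tgt e} = {v, w}} = 1))"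
proof -
  from assms(2) have "finite V" "finite E" "V \<noteq> {}" and part: "V0 \<union> Vp = V"
    and disj: "V0 \<inter> Vp = {}" and conn: "graph_connected V E src tgt"
    and genus: "int (\<Sum>v\<in>V. gen v) + betti1 V E = int g"
    unfolding tropical_type_def by blast+
  moreover have "bipartite V0 Vp E src tgt"
    using assms(3) by (rule induces_essential_types_bipartite)
  moreover have "finite V0"
    using \<open>finite V\<close> part by blast
  ultimately show ?thesis
    using k_type_eq_imp_star[of V E V0 Vp src tgt gen g] star_imp_k_type_eq[of V0 Vp V gen E g]
    by blast
qed

end
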